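(* Let $\mathcal X$ be a separable metric space with its Borel $\sigma$-field, fix a Markov kernel $P_{Y|X}$, and let $\theta(\cdot)$ be a regression functional such that the map $P_X\mapsto\theta(P_{Y|X}\otimes P_X)$, on acceptable regressor distributions, is continuous with respect to weak convergence of distributions. Fix an acceptable $P_X$ and put $P=P_{Y|X}\otimes P_X$. For a finite regressor dataset $\mathbf X=(x_1,\dots,x_N)$ (any $N$) with acceptable empirical distribution $\hat P_X=\frac1N\sum_{i=1}^N\delta_{x_i}$, define $\theta(\mathbf X):=\theta(P_{Y|X}\otimes\hat P_X)$. Then $\theta(\cdot)$ is well-specified for $P_{Y|X}$ if and only if $\theta(\mathbf X)-\theta(P)=0$ for every such acceptable dataset $\mathbf X$.
   Context: A joint distribution $P$ of $(Y,X)$ on $\mathcal Y\times\mathcal X$ is written $P=P_{Y|X}\otimes P_X$, meaning $P(dy,dx)=P_{Y|X=x}(dy)P_X(dx)$, with $P_X$ the marginal of $X$ and $P_{Y|X}$ a Markov kernel defined for every $x$. There is a designated set of "acceptable" regressor distributions, with $P_{Y|X}\otimes P_X$ in the domain of $\theta$ for acceptable $P_X$. Standing assumption: for every acceptable $P_X$, the empirical distribution of $N$ iid draws from $P_X$ is acceptable with probability one for all sufficiently large $N$. $\theta$ is well-specified for $P_{Y|X}$ if $\theta(P_{Y|X}\otimes P_X)=\theta(P_{Y|X}\otimes P_X')$ for all acceptable $P_X,P_X'$. *)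

theory Defs
  imports "HOL-Probability.Probability"
begin

text \<open>The joint distribution  P_{Y|X} (x) P_X  on  Y \<times> X : draw x from P_X, then y from the kernel at x.\<close>
definition joint :: "'y measure \<Rightarrow> ('x::topological_space \<Rightarrow> 'y measure) \<Rightarrow> 'x measure \<Rightarrow> ('y \<times> 'x) measure" where
  "joint MY K PX = PX \<bind> (\<lambda>x. distr (K x) (MY \<Otimes>\<^sub>M borel) (\<lambda>y. (y, x)))"

text \<open>Empirical distribution of a (nonempty) finite dataset, as a measure on the Borel sets.\<close>
definition emp :: "'x::topological_space list \<Rightarrow> 'x measure" where
  "emp xs = distr (measure_pmf (pmf_of_multiset (mset xs))) borel id"

definition weak_conv_seq :: "(nat \<Rightarrow> 'x::topological_space measure) \<Rightarrow> 'x measure \<Rightarrow> bool" where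
  "weak_conv_seq \<mu>s \<mu> \<longleftrightarrow>
     (\<forall>f::'x \<Rightarrow> real. continuous_on UNIV f \<and> bounded (range f) \<longrightarrow>
        (\<lambda>n. \<integral>x. f x \<partial>\<mu>s n) \<longlonglongrightarrow> (\<integral>x. f x \<partial>\<mu>))"

definition well_specified ::
  "(('y \<times> 'x) measure \<Rightarrow> 'b) \<Rightarrow> 'y measure \<Rightarrow> ('x::topological_space \<Rightarrow> 'y measure) \<Rightarrow> ('x measure \<Rightarrow> bool) \<Rightarrow> bool" where
  "well_specified \<theta> MY K acc \<longleftrightarrow>
     (\<forall>PX PX'. acc PX \<longrightarrow> acc PX' \<longrightarrow> \<theta> (joint MY K PX) = \<theta> (joint MY K PX'))"

end

theory Submission
  imports Defs
begin

text \<open>Only the passage from datasets to arbitrary acceptable regressor distributions has content.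
  Given an acceptable \<open>P\<^sub>X\<close>, draw an i.i.d. sample from it: almost surely its empirical
  distributions are eventually acceptable (standing assumption) and converge weakly to \<open>P\<^sub>X\<close>
  (Varadarajan's theorem: by the portmanteau criterion it suffices to control the frequencies of
  countably many open sets, and for each of them the strong law of large numbers applies). Along
  such a sample path \<open>\<theta>\<close> takes the value \<open>\<theta>(P)\<close>, so by continuity so does its limit.\<close>

lemma prob_space_emp: "xs \<noteq> [] \<Longrightarrow> prob_space (emp xs)"
  unfolding emp_def by (auto intro!: prob_space.prob_space_distr prob_space_measure_pmf)

lemma sets_emp: "sets (emp xs) = sets borel"
  unfolding emp_def by simp

lemma measure_emp:
  assumes "xs \<noteq> []" and "V \<in> sets borel"
  shows "measure (emp xs) V = length (filter (\<lambda>x. x \<in> V) xs) / length xs"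
proof -
  let ?M = "mset xs"
  have ne: "?M \<noteq> {#}" using assms(1) by simp
  have "measure (emp xs) V = measure (measure_pmf (pmf_of_multiset ?M)) (V \<inter> set_mset ?M)"
    using assms unfolding emp_def
    by (subst measure_distr) (auto simp flip: measure_Int_set_pmf[of _ V] simp: ne)
  also have "\<dots> = (\<Sum>x\<in>V \<inter> set_mset ?M. real (count ?M x)) / size ?M"
    using ne by (subst measure_measure_pmf_finite) (auto simp: sum_divide_distrib)
  also have "(\<Sum>x\<in>V \<inter> set_mset ?M. real (count ?M x)) = size (filter_mset (\<lambda>x. x \<in> V) ?M)"
    by (subst size_multiset_overloaded_eq) (auto intro: sum.cong)
  finally show ?thesis
    by (simp flip: mset_filter)
qed

lemma measure_emp_prefix:
  assumes "N > 0" and "V \<in> sets borel"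
  shows "measure (emp (map \<omega> [0..<N])) V = (\<Sum>i<N. indicator V (\<omega> i)) / real N"
proof -
  have "real (length (filter (\<lambda>x. x \<in> V) (map \<omega> [0..<n]))) = (\<Sum>i<n. indicator V (\<omega> i))" for n
    by (induction n) (auto simp: indicator_def)
  then show ?thesis
    using assms by (simp add: measure_emp)
qed

lemma indep_vars_PiM_components:
  assumes "prob_space \<mu>"
  shows "prob_space.indep_vars (PiM UNIV (\<lambda>_::nat. \<mu>)) (\<lambda>_. \<mu>) (\<lambda>i \<omega>. \<omega> i) UNIV"
proof -
  interpret P: prob_space "PiM UNIV (\<lambda>_::nat. \<mu>)"
    using assms by (intro prob_space_PiM) auto
  have "(\<lambda>i. distr (PiM UNIV (\<lambda>_::nat. \<mu>)) \<mu> (\<lambda>\<omega>. \<omega> i)) = (\<lambda>_. \<mu>)"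
    using distr_PiM_component[of "UNIV::nat set" "\<lambda>_. \<mu>"] assms by auto
  then show ?thesis
    by (subst P.indep_vars_iff_distr_eq_PiM) (simp_all add: restrict_UNIV distr_id)
qed

lemma frequency_deviation_bound:
  assumes \<nu>: "prob_space \<nu>" and V: "V \<in> sets \<nu>" and N: "N > 0" and \<epsilon>: "\<epsilon> \<ge> 0"
  shows "measure (PiM UNIV (\<lambda>_::nat. \<nu>))
           {\<omega> \<in> space (PiM UNIV (\<lambda>_::nat. \<nu>)). \<bar>(\<Sum>i<N. indicator V (\<omega> i)) / N - measure \<nu> V\<bar> \<ge> \<epsilon>}
         \<le> 2 * exp (-2 * N * \<epsilon>\<^sup>2)"
proof -
  let ?\<Omega> = "PiM UNIV (\<lambda>_::nat. \<nu>)"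
  interpret P: prob_space ?\<Omega>
    using \<nu> by (intro prob_space_PiM) auto
  have distr_component: "distr ?\<Omega> \<nu> (\<lambda>\<omega>. \<omega> i) = \<nu>" for i
    using distr_PiM_component[of UNIV "\<lambda>_. \<nu>" i] \<nu> by simp
  have expectation: "P.expectation (\<lambda>\<omega>. indicator V (\<omega> 0)) = measure \<nu> V"
    using integral_distr[of "\<lambda>\<omega>. \<omega> 0" ?\<Omega> \<nu> "indicator V :: _ \<Rightarrow> real"] V
    by (simp add: distr_component)
  interpret H: Hoeffding_ineq_iid ?\<Omega> "{..<N}" "\<lambda>i \<omega>. indicator V (\<omega> i)" "\<lambda>\<omega>. indicator V (\<omega> 0)" 0 1
    "measure \<nu> V"
  proof unfold_locales
    show "P.indep_vars (\<lambda>_. borel) (\<lambda>i \<omega>. indicator V (\<omega> i) :: real) {..<N}"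
    proof (rule P.indep_vars_subset)
      show "P.indep_vars (\<lambda>_. borel) (\<lambda>i \<omega>. indicator V (\<omega> i) :: real) UNIV"
        using P.indep_vars_compose2[OF indep_vars_PiM_components[OF \<nu>], of "\<lambda>_ x. indicator V x :: real" "\<lambda>_. borel"] V
        by auto
    qed simp
    have "distr ?\<Omega> borel (\<lambda>\<omega>. indicator V (\<omega> j)) = distr \<nu> borel (indicator V :: _ \<Rightarrow> real)" for j
      using distr_distr[of "indicator V" \<nu> borel "\<lambda>\<omega>. \<omega> j" ?\<Omega>, symmetric] V
      by (simp add: comp_def distr_component)
    then show "distr ?\<Omega> borel (\<lambda>\<omega>. indicator V (\<omega> i) :: real) = distr ?\<Omega> borel (\<lambda>\<omega>. indicator V (\<omega> 0))" for i
      by simp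
  qed (use V expectation in \<open>auto simp: indicator_def\<close>)
  show ?thesis
    using H.Hoeffding_ineq_abs_ge'[OF \<epsilon>] N by (simp add: lessThan_empty_iff)
qed

lemma AE_tendsto_if_AE_eventually_dist:
  fixes f :: "nat \<Rightarrow> 'a \<Rightarrow> 'b::metric_space"
  assumes "\<And>\<epsilon>. \<epsilon> > 0 \<Longrightarrow> AE x in M. eventually (\<lambda>n. dist (f n x) (l x) < \<epsilon>) sequentially"
  shows "AE x in M. (\<lambda>n. f n x) \<longlonglongrightarrow> l x"
proof -
  have "AE x in M. \<forall>m. eventually (\<lambda>n. dist (f n x) (l x) < inverse (Suc m)) sequentially"
    using assms by (subst AE_all_countable) auto
  then show ?thesis
  proof (rule AE_mp, intro AE_I2 impI)
    fix x assume close: "\<forall>m. eventually (\<lambda>n. dist (f n x) (l x) < inverse (Suc m)) sequentially"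
    show "(\<lambda>n. f n x) \<longlonglongrightarrow> l x"
    proof (rule tendstoI)
      fix r :: real assume "r > 0"
      then obtain m where m: "inverse (Suc m) < r"
        using reals_Archimedean by blast
      from close[rule_format, of m] show "eventually (\<lambda>n. dist (f n x) (l x) < r) sequentially"
        by (rule eventually_mono) (use m in linarith)
    qed
  qed
qed

lemma AE_frequency_tendsto:
  assumes \<nu>: "prob_space \<nu>" and V: "V \<in> sets \<nu>"
  shows "AE \<omega> in PiM UNIV (\<lambda>_::nat. \<nu>).
           (\<lambda>N. (\<Sum>i<N. indicator V (\<omega> i)) / real N) \<longlonglongrightarrow> measure \<nu> V"
proof (rule AE_tendsto_if_AE_eventually_dist)
  fix \<epsilon> :: real assume \<epsilon>: "\<epsilon> > 0"
  let ?\<Omega> = "PiM UNIV (\<lambda>_::nat. \<nu>)"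
  interpret P: prob_space ?\<Omega>
    using \<nu> by (intro prob_space_PiM) auto
  define A where "A N = {\<omega> \<in> space ?\<Omega>. N > 0 \<and>
      \<bar>(\<Sum>i<N. indicator V (\<omega> i)) / N - measure \<nu> V\<bar> \<ge> \<epsilon>}" for N
  have A_sets [measurable]: "A N \<in> P.events" for N
    unfolding A_def using V by measurable
  have bound: "P.prob (A N) \<le> 2 * exp (-2 * \<epsilon>\<^sup>2) ^ N" for N
  proof (cases "N = 0")
    case False
    then show ?thesis
      using frequency_deviation_bound[OF \<nu> V, of N \<epsilon>] \<epsilon>
      by (simp add: A_def exp_of_nat_mult[symmetric] mult_ac)
  qed (simp add: A_def)
  have "summable (\<lambda>N. 2 * exp (-2 * \<epsilon>\<^sup>2) ^ N)"
    using \<epsilon> by (intro summable_mult summable_geometric) auto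
  then have "summable (\<lambda>N. P.prob (A N))"
    by (rule summable_comparison_test') (metis bound measure_nonneg real_norm_def abs_of_nonneg)
  then have "AE \<omega> in ?\<Omega>. eventually (\<lambda>N. \<omega> \<in> space ?\<Omega> - A N) sequentially"
    by (intro borel_cantelli_AE1) (auto simp: P.emeasure_eq_measure)
  then show "AE \<omega> in ?\<Omega>. eventually
      (\<lambda>N. dist ((\<Sum>i<N. indicator V (\<omega> i)) / real N) (measure \<nu> V) < \<epsilon>) sequentially"
  proof (rule AE_mp, intro AE_I2 impI)
    fix \<omega> assume "eventually (\<lambda>N. \<omega> \<in> space ?\<Omega> - A N) sequentially"
    with eventually_gt_at_top[of "0::nat"]
    show "eventually (\<lambda>N. dist ((\<Sum>i<N. indicator V (\<omega> i)) / real N) (measure \<nu> V) < \<epsilon>) sequentially"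
      by eventually_elim (auto simp: A_def dist_real_def)
  qed
qed

lemma card_positive_less_bounds:
  fixes c :: real
  assumes "0 < c" "c < k"
  shows "real (card {j\<in>{1..k}. real j < c}) \<le> c" "c \<le> real (card {j\<in>{1..k}. real j < c}) + 1"
proof -
  have c1: "\<lceil>c\<rceil> \<ge> 1"
    using assms by (simp add: one_le_ceiling)
  have "{j\<in>{1..k}. real j < c} = {1..nat (\<lceil>c\<rceil> - 1)}"
  proof (intro set_eqI iffI)
    fix j assume j: "j \<in> {j\<in>{1..k}. real j < c}"
    then have "int j < \<lceil>c\<rceil>" by (simp add: less_ceiling_iff)
    then show "j \<in> {1..nat (\<lceil>c\<rceil> - 1)}" using j by auto
  next
    fix j assume j: "j \<in> {1..nat (\<lceil>c\<rceil> - 1)}"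
    then have "int j < \<lceil>c\<rceil>" using c1 by auto
    then have "real j < c" by (simp add: less_ceiling_iff)
    then show "j \<in> {j\<in>{1..k}. real j < c}" using j assms by auto
  qed
  then have "real (card {j\<in>{1..k}. real j < c}) = of_int (\<lceil>c\<rceil> - 1)"
    using c1 by simp
  then show "real (card {j\<in>{1..k}. real j < c}) \<le> c" "c \<le> real (card {j\<in>{1..k}. real j < c}) + 1"
    using ceiling_correct[of c] by linarith+
qed

lemma integral_superlevel_sum_bounds:
  fixes g :: "'x::topological_space \<Rightarrow> real" and k :: nat
  assumes L: "prob_space L" "sets L = sets borel"
    and g: "g \<in> borel_measurable borel" and range: "\<And>x. a < g x \<and> g x < a + M" and k: "k > 0"
  defines "S \<equiv> M / real k * (\<Sum>j\<in>{1..k}. measure L {x. a + real j * M / real k < g x})"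
  shows "S \<le> (\<integral>x. g x \<partial>L) - a" and "(\<integral>x. g x \<partial>L) - a \<le> S + M / real k"
proof -
  interpret prob_space L by (rule L)
  have M: "M > 0" using range[of undefined] by simp
  have level_sets [measurable]: "{x. a + real j * M / real k < g x} \<in> sets L" for j :: nat
    using g L(2) by measurable
  have g_L [measurable]: "g \<in> borel_measurable L"
    using g by (subst measurable_cong_sets[OF L(2) refl])
  have "\<bar>g x\<bar> \<le> \<bar>a\<bar> + \<bar>M\<bar>" for x
    using range[of x] by (smt (verit))
  then have "AE x in L. norm (g x) \<le> \<bar>a\<bar> + \<bar>M\<bar>"
    by simp
  then have int_g: "integrable L g"
    using g_L by (rule integrable_const_bound)
  define h where "h x = M / real k * (\<Sum>j\<in>{1..k}. indicator {x. a + real j * M / real k < g x} x)" for x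
  have int_h: "integrable L h" and integral_h: "(\<integral>x. h x \<partial>L) = S"
    unfolding h_def S_def by (auto simp: integral_sum emeasure_eq_measure)
  have h_approx: "h x \<le> g x - a \<and> g x - a \<le> h x + M / real k" for x
  proof -
    define c where "c = (g x - a) * k / M"
    have "(g x - a) / M < 1"
      using range[of x] M by simp
    then have c: "0 < c" "c < k"
      using range[of x] M k by (simp_all add: c_def mult.commute[of _ "real k"] mult_less_cancel_left1 flip: times_divide_eq_right)
    have "(a + real j * M / real k < g x) \<longleftrightarrow> real j < c" for j :: nat
      using M k by (simp add: c_def field_simps)
    then have "h x = M / real k * card {j\<in>{1..k}. real j < c}"
      by (simp add: h_def indicator_def sum.If_cases Int_def)
    moreover have "g x - a = M / real k * c"
      using M k by (simp add: c_def)
    ultimately show ?thesis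
      using mult_left_mono[OF card_positive_less_bounds(1)[OF c], of "M / real k"]
        mult_left_mono[OF card_positive_less_bounds(2)[OF c], of "M / real k"] M
      by (simp add: distrib_left)
  qed
  have "(\<integral>x. h x \<partial>L) \<le> (\<integral>x. g x - a \<partial>L)" "(\<integral>x. g x - a \<partial>L) \<le> (\<integral>x. h x + M / real k \<partial>L)"
    by (rule integral_mono; use int_h int_g h_approx in simp)+
  then show "S \<le> (\<integral>x. g x \<partial>L) - a" "(\<integral>x. g x \<partial>L) - a \<le> S + M / real k"
    using int_g int_h by (simp_all add: integral_h prob_space)
qed

lemma eventually_integral_gt_if_eventually_measure_open_gt:
  fixes \<nu>s :: "nat \<Rightarrow> 'x::topological_space measure" and g :: "'x \<Rightarrow> real"
  assumes \<nu>s: "\<And>n. prob_space (\<nu>s n)" "\<And>n. sets (\<nu>s n) = sets borel"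
    and \<nu>: "prob_space \<nu>" "sets \<nu> = sets borel"
    and open_gt: "\<And>U e. open U \<Longrightarrow> e > 0 \<Longrightarrow> eventually (\<lambda>n. measure (\<nu>s n) U > measure \<nu> U - e) sequentially"
    and g: "continuous_on UNIV g" and B: "\<And>x. \<bar>g x\<bar> \<le> B" and \<epsilon>: "\<epsilon> > 0"
  shows "eventually (\<lambda>n. (\<integral>x. g x \<partial>\<nu>s n) > (\<integral>x. g x \<partial>\<nu>) - \<epsilon>) sequentially"
proof -
  define a where "a = - B - 1"
  define M where "M = 2 * B + 2"
  have range: "a < g x \<and> g x < a + M" for x
    using B[of x] by (auto simp: a_def M_def)
  then have M: "M > 0" by force
  obtain k :: nat where "2 * M / \<epsilon> < k"
    using reals_Archimedean2 by blast
  moreover from this have k: "k > 0"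
    using M \<epsilon> by (cases k) (auto simp: divide_less_0_iff)
  ultimately have mesh: "M / real k < \<epsilon> / 2"
    using \<epsilon> by (simp add: field_simps)
  have g_borel: "g \<in> borel_measurable borel"
    using g by (rule borel_measurable_continuous_onI)
  define T where "T j = {x. a + real j * M / real k < g x}" for j :: nat
  have "open (T j)" for j
    unfolding T_def by (rule open_Collect_less[where f = "\<lambda>_. _"]) (auto intro: g continuous_intros)
  then have "eventually (\<lambda>n. \<forall>j\<in>{1..k}. measure (\<nu>s n) (T j) > measure \<nu> (T j) - \<epsilon> / (2 * M)) sequentially"
    using \<epsilon> M by (intro eventually_ball_finite ballI open_gt) auto
  then show ?thesis
  proof (rule eventually_mono)
    fix n assume close: "\<forall>j\<in>{1..k}. measure (\<nu>s n) (T j) > measure \<nu> (T j) - \<epsilon> / (2 * M)"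
    have "(\<Sum>j\<in>{1..k}. measure \<nu> (T j) - \<epsilon> / (2 * M)) < (\<Sum>j\<in>{1..k}. measure (\<nu>s n) (T j))"
      using close k by (intro sum_strict_mono) auto
    then have "(\<Sum>j\<in>{1..k}. measure \<nu> (T j)) - real k * (\<epsilon> / (2 * M)) < (\<Sum>j\<in>{1..k}. measure (\<nu>s n) (T j))"
      by (simp add: sum_subtractf)
    then have "M / real k * ((\<Sum>j\<in>{1..k}. measure \<nu> (T j)) - real k * (\<epsilon> / (2 * M)))
        < M / real k * (\<Sum>j\<in>{1..k}. measure (\<nu>s n) (T j))"
      using M k by (intro mult_strict_left_mono) auto
    moreover have "M / real k * (real k * (\<epsilon> / (2 * M))) = \<epsilon> / 2"
      using M k by simp
    ultimately have "M / real k * (\<Sum>j\<in>{1..k}. measure \<nu> (T j)) - \<epsilon> / 2 < M / real k * (\<Sum>j\<in>{1..k}. measure (\<nu>s n) (T j))"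
      by (simp add: right_diff_distrib)
    moreover note integral_superlevel_sum_bounds[OF \<nu>s g_borel range k, folded T_def, of n]
      integral_superlevel_sum_bounds[OF \<nu> g_borel range k, folded T_def]
    ultimately show "(\<integral>x. g x \<partial>\<nu>s n) > (\<integral>x. g x \<partial>\<nu>) - \<epsilon>"
      using mesh by linarith
  qed
qed

lemma weak_conv_seq_if_eventually_measure_open_gt:
  fixes \<nu>s :: "nat \<Rightarrow> 'x::topological_space measure"
  assumes \<nu>s: "\<And>n. prob_space (\<nu>s n)" "\<And>n. sets (\<nu>s n) = sets borel"
    and \<nu>: "prob_space \<nu>" "sets \<nu> = sets borel"
    and open_gt: "\<And>U e. open U \<Longrightarrow> e > 0 \<Longrightarrow> eventually (\<lambda>n. measure (\<nu>s n) U > measure \<nu> U - e) sequentially"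
  shows "weak_conv_seq \<nu>s \<nu>"
  unfolding weak_conv_seq_def
proof (intro allI impI)
  fix f :: "'x \<Rightarrow> real" assume f: "continuous_on UNIV f \<and> bounded (range f)"
  then obtain B where B: "\<And>x. \<bar>f x\<bar> \<le> B"
    by (auto simp: bounded_iff)
  have "continuous_on UNIV (\<lambda>x. - f x)"
    using f by (auto intro: continuous_intros)
  note lower = eventually_integral_gt_if_eventually_measure_open_gt[OF \<nu>s \<nu> open_gt]
  show "(\<lambda>n. \<integral>x. f x \<partial>\<nu>s n) \<longlonglongrightarrow> (\<integral>x. f x \<partial>\<nu>)"
  proof (rule tendstoI)
    fix r :: real assume "r > 0"
    have "eventually (\<lambda>n. (\<integral>x. f x \<partial>\<nu>s n) > (\<integral>x. f x \<partial>\<nu>) - r) sequentially"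
      using f B \<open>r > 0\<close> by (intro lower) auto
    moreover have "eventually (\<lambda>n. (\<integral>x. - f x \<partial>\<nu>s n) > (\<integral>x. - f x \<partial>\<nu>) - r) sequentially"
      using \<open>continuous_on UNIV (\<lambda>x. - f x)\<close> B \<open>r > 0\<close> by (intro lower) auto
    ultimately show "eventually (\<lambda>n. dist (\<integral>x. f x \<partial>\<nu>s n) (\<integral>x. f x \<partial>\<nu>) < r) sequentially"
      by eventually_elim (auto simp: dist_real_def abs_less_iff)
  qed
qed

lemma countable_open_inner_approximation:
  obtains \<V> :: "'x::second_countable_topology set set"
  where "countable \<V>" "\<And>V. V \<in> \<V> \<Longrightarrow> open V"
    "\<And>\<mu> U e. finite_measure \<mu> \<Longrightarrow> sets \<mu> = sets borel \<Longrightarrow> open U \<Longrightarrow> e > 0 \<Longrightarrow>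
        \<exists>V\<in>\<V>. V \<subseteq> U \<and> measure \<mu> V > measure \<mu> U - e"
proof -
  obtain \<B> :: "'x set set" where \<B>: "countable \<B>" "topological_basis \<B>"
    using ex_countable_basis by blast
  define \<V> where "\<V> = Union ` {F. finite F \<and> F \<subseteq> \<B>}"
  have "countable \<V>"
    unfolding \<V>_def using \<B>(1) by (intro countable_image countable_Collect_finite_subset)
  moreover have open_\<V>: "open V" if "V \<in> \<V>" for V
    using that \<B>(2) unfolding \<V>_def topological_basis_def by (auto intro!: open_Union)
  moreover have "\<exists>V\<in>\<V>. V \<subseteq> U \<and> measure \<mu> V > measure \<mu> U - e"
    if "finite_measure \<mu>" and sets_\<mu>: "sets \<mu> = sets borel" and "open U" and "e > 0"
    for \<mu> :: "'x measure" and U e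
  proof -
    interpret finite_measure \<mu> by fact
    obtain \<B>' where \<B>': "\<B>' \<subseteq> \<B>" "\<Union>\<B>' = U"
      using \<B>(2) \<open>open U\<close> unfolding topological_basis_def by blast
    show ?thesis
    proof (cases "\<B>' = {}")
      case True
      then show ?thesis
        using \<B>' \<open>e > 0\<close> by (intro bexI[of _ "{}"]) (auto simp: \<V>_def intro: image_eqI[of _ _ "{}"])
    next
      case False
      define W where "W n = \<Union>(from_nat_into \<B>' ` {..n})" for n
      have W: "W n \<in> \<V>" "W n \<subseteq> U" for n
        unfolding \<V>_def W_def using from_nat_into[OF False] \<B>' by blast+
      have "range W \<subseteq> sets \<mu>"
        using open_\<V>[OF W(1)] sets_\<mu> by auto
      moreover have "incseq W"
        unfolding W_def incseq_def by (intro allI impI Union_mono image_mono) auto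
      moreover have "(\<Union>n. W n) = U"
        using range_from_nat_into[OF False countable_subset[OF \<B>'(1) \<B>(1)]] \<B>'(2)
        unfolding W_def by blast
      ultimately have "(\<lambda>n. measure \<mu> (W n)) \<longlonglongrightarrow> measure \<mu> U"
        by (metis finite_Lim_measure_incseq)
      then have "eventually (\<lambda>n. measure \<mu> (W n) > measure \<mu> U - e) sequentially"
        using \<open>e > 0\<close> by (intro order_tendstoD(1)) auto
      then obtain n where "measure \<mu> (W n) > measure \<mu> U - e"
        by (auto simp: eventually_sequentially)
      then show ?thesis
        using W by blast
    qed
  qed
  ultimately show ?thesis
    by (rule that)
qed

lemma AE_weak_conv_seq_emp:
  fixes \<mu> :: "'x::second_countable_topology measure"
  assumes \<mu>: "prob_space \<mu>" "sets \<mu> = sets borel"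
  shows "AE \<omega> in PiM UNIV (\<lambda>_::nat. \<mu>). weak_conv_seq (\<lambda>n. emp (map \<omega> [0..<Suc n])) \<mu>"
proof -
  obtain \<V> :: "'x set set" where "countable \<V>" and open_\<V>: "\<And>V. V \<in> \<V> \<Longrightarrow> open V"
    and approx: "\<And>\<mu> U e. finite_measure \<mu> \<Longrightarrow> sets \<mu> = sets borel \<Longrightarrow> open U \<Longrightarrow> e > 0 \<Longrightarrow>
        \<exists>V\<in>\<V>. V \<subseteq> U \<and> measure \<mu> V > measure \<mu> U - e"
    by (rule countable_open_inner_approximation) blast
  interpret prob_space \<mu> by (rule \<mu>(1))
  have "AE \<omega> in PiM UNIV (\<lambda>_::nat. \<mu>). \<forall>V\<in>\<V>.
           (\<lambda>N. (\<Sum>i<N. indicator V (\<omega> i)) / real N) \<longlonglongrightarrow> measure \<mu> V"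
    using \<open>countable \<V>\<close> open_\<V> \<mu>(2)
    by (subst AE_ball_countable) (auto intro!: AE_frequency_tendsto \<mu>(1))
  then show ?thesis
  proof (rule AE_mp, intro AE_I2 impI)
    fix \<omega> :: "nat \<Rightarrow> 'x"
    assume freq: "\<forall>V\<in>\<V>. (\<lambda>N. (\<Sum>i<N. indicator V (\<omega> i)) / real N) \<longlonglongrightarrow> measure \<mu> V"
    show "weak_conv_seq (\<lambda>n. emp (map \<omega> [0..<Suc n])) \<mu>"
    proof (rule weak_conv_seq_if_eventually_measure_open_gt)
      fix U :: "'x set" and e :: real assume "open U" and "e > 0"
      then obtain V where V: "V \<in> \<V>" "V \<subseteq> U" "measure \<mu> V > measure \<mu> U - e / 2"
        using approx[of \<mu> U "e / 2"] \<mu>(2) finite_measure_axioms by auto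
      have "eventually (\<lambda>N. (\<Sum>i<N. indicator V (\<omega> i)) / real N > measure \<mu> V - e / 2) sequentially"
        using freq V(1) \<open>e > 0\<close> by (intro order_tendstoD(1)) auto
      moreover have "measure (emp (map \<omega> [0..<Suc n])) V = (\<Sum>i<Suc n. indicator V (\<omega> i)) / real (Suc n)" for n
        using open_\<V>[OF V(1)] by (intro measure_emp_prefix) auto
      ultimately have "eventually (\<lambda>n. measure (emp (map \<omega> [0..<Suc n])) V > measure \<mu> V - e / 2) sequentially"
        by (simp only: eventually_sequentially_Suc[symmetric, of "\<lambda>N. _ < (\<Sum>i<N. _ i) / real N"])
      then show "eventually (\<lambda>n. measure (emp (map \<omega> [0..<Suc n])) U > measure \<mu> U - e) sequentially"
      proof (rule eventually_mono)
        fix n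
        interpret E: prob_space "emp (map \<omega> [0..<Suc n])"
          by (simp add: prob_space_emp)
        have "measure (emp (map \<omega> [0..<Suc n])) V \<le> measure (emp (map \<omega> [0..<Suc n])) U"
          using V(2) open_\<V>[OF V(1)] \<open>open U\<close> by (intro E.finite_measure_mono) (auto simp: sets_emp)
        then show "measure (emp (map \<omega> [0..<Suc n])) V > measure \<mu> V - e / 2 \<Longrightarrow>
            measure (emp (map \<omega> [0..<Suc n])) U > measure \<mu> U - e"
          using V(3) by linarith
      qed
    qed (simp_all add: prob_space_emp sets_emp \<mu>)
  qed
qed

lemma weak_conv_seq_ignore_initial_segment:
  "weak_conv_seq \<mu>s \<mu> \<Longrightarrow> weak_conv_seq (\<lambda>n. \<mu>s (n + k)) \<mu>"
  unfolding weak_conv_seq_def by (auto intro: LIMSEQ_ignore_initial_segment)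

lemma eq_if_eq_on_acceptable_emp:
  fixes F :: "'x::second_countable_topology measure \<Rightarrow> 'b::t2_space"
  assumes acc_distr: "\<And>\<mu>. acc \<mu> \<Longrightarrow> prob_space \<mu> \<and> sets \<mu> = sets borel"
    and standing: "\<And>\<mu>. acc \<mu> \<Longrightarrow>
        (AE \<omega> in PiM UNIV (\<lambda>_::nat. \<mu>). eventually (\<lambda>N. acc (emp (map \<omega> [0..<N]))) sequentially)"
    and cont: "\<And>\<mu>s \<mu>. (\<forall>n. acc (\<mu>s n)) \<Longrightarrow> acc \<mu> \<Longrightarrow> weak_conv_seq \<mu>s \<mu> \<Longrightarrow>
        (\<lambda>n. F (\<mu>s n)) \<longlonglongrightarrow> F \<mu>"
    and emp_eq: "\<And>xs. xs \<noteq> [] \<Longrightarrow> acc (emp xs) \<Longrightarrow> F (emp xs) = c"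
    and "acc \<mu>"
  shows "F \<mu> = c"
proof -
  have \<mu>: "prob_space \<mu>" "sets \<mu> = sets borel"
    using acc_distr[OF \<open>acc \<mu>\<close>] by auto
  interpret P: prob_space "PiM UNIV (\<lambda>_::nat. \<mu>)"
    using \<mu> by (intro prob_space_PiM) auto
  have "AE \<omega> in PiM UNIV (\<lambda>_::nat. \<mu>). eventually (\<lambda>N. acc (emp (map \<omega> [0..<N]))) sequentially
      \<and> weak_conv_seq (\<lambda>n. emp (map \<omega> [0..<Suc n])) \<mu>"
    using standing[OF \<open>acc \<mu>\<close>] AE_weak_conv_seq_emp[OF \<mu>] by eventually_elim auto
  then obtain \<omega> where "eventually (\<lambda>N. acc (emp (map \<omega> [0..<N]))) sequentially"
    and weak: "weak_conv_seq (\<lambda>n. emp (map \<omega> [0..<Suc n])) \<mu>"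
    using eventually_happens'[OF P.ae_filter_bot] by blast
  then obtain N where acc_emp: "\<And>n. n \<ge> N \<Longrightarrow> acc (emp (map \<omega> [0..<n]))"
    by (auto simp: eventually_sequentially)
  define \<mu>s where "\<mu>s n = emp (map \<omega> [0..<Suc (n + N)])" for n
  have acc_\<mu>s: "\<forall>n. acc (\<mu>s n)"
    unfolding \<mu>s_def by (intro allI acc_emp) simp
  have "(\<lambda>n. F (\<mu>s n)) \<longlonglongrightarrow> F \<mu>"
    using acc_\<mu>s \<open>acc \<mu>\<close> weak_conv_seq_ignore_initial_segment[OF weak, of N]
    unfolding \<mu>s_def by (rule cont)
  moreover have "F (\<mu>s n) = c" for n
    using acc_\<mu>s unfolding \<mu>s_def by (intro emp_eq) auto
  ultimately have "(\<lambda>n. c) \<longlonglongrightarrow> F \<mu>"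
    by simp
  then show ?thesis
    by (simp add: LIMSEQ_const_iff)
qed

theorem proposition4p3:
  fixes MY :: "'y measure"
    and K :: "'x::{metric_space, second_countable_topology} \<Rightarrow> 'y measure"
    and acc :: "'x measure \<Rightarrow> bool"
    and \<theta> :: "('y \<times> 'x) measure \<Rightarrow> 'b::real_normed_vector"
    and PX :: "'x measure"
  assumes kernel: "K \<in> borel \<rightarrow>\<^sub>M prob_algebra MY"
    and acc_distr: "\<And>\<mu>. acc \<mu> \<Longrightarrow> prob_space \<mu> \<and> sets \<mu> = sets borel"
    and standing: "\<And>\<mu>. acc \<mu> \<Longrightarrow>
        (AE \<omega> in PiM UNIV (\<lambda>_::nat. \<mu>). eventually (\<lambda>N. acc (emp (map \<omega> [0..<N]))) sequentially)"
    and cont: "\<And>\<mu>s \<mu>. (\<forall>n. acc (\<mu>s n)) \<Longrightarrow> acc \<mu> \<Longrightarrow> weak_conv_seq \<mu>s \<mu> \<Longrightarrow>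
        (\<lambda>n. \<theta> (joint MY K (\<mu>s n))) \<longlonglongrightarrow> \<theta> (joint MY K \<mu>)"
    and PX: "acc PX"
  shows "well_specified \<theta> MY K acc \<longleftrightarrow>
    (\<forall>xs. xs \<noteq> [] \<longrightarrow> acc (emp xs) \<longrightarrow> \<theta> (joint MY K (emp xs)) - \<theta> (joint MY K PX) = 0)"
proof
  assume "well_specified \<theta> MY K acc"
  then have "\<theta> (joint MY K \<mu>) = \<theta> (joint MY K PX)" if "acc \<mu>" for \<mu>
    using PX that unfolding well_specified_def by blast
  then show "\<forall>xs. xs \<noteq> [] \<longrightarrow> acc (emp xs) \<longrightarrow> \<theta> (joint MY K (emp xs)) - \<theta> (joint MY K PX) = 0"
    by simp
next
  assume "\<forall>xs. xs \<noteq> [] \<longrightarrow> acc (emp xs) \<longrightarrow> \<theta> (joint MY K (emp xs)) - \<theta> (joint MY K PX) = 0"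
  then have "\<theta> (joint MY K (emp xs)) = \<theta> (joint MY K PX)" if "xs \<noteq> []" "acc (emp xs)" for xs
    using that by simp
  then have "\<theta> (joint MY K \<mu>) = \<theta> (joint MY K PX)" if "acc \<mu>" for \<mu>
    using eq_if_eq_on_acceptable_emp[where F = "\<lambda>\<mu>. \<theta> (joint MY K \<mu>)", OF acc_distr standing cont _ that]
    by blast
  then show "well_specified \<theta> MY K acc"
    unfolding well_specified_def by metis
qed

end
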